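(* Let $G$ be a graph with at least one isolated vertex, let $T$ be a (possibly empty) minimum twin cover of $G$, and let $t\ge1$. (i) If $G=K_1$, then $\det(G)=0$ and $\det(\mu_t(G))=t$. (ii) If $G\ne K_1$, then $\det(\mu_t(G))=t|T|+\det(G)+t-1$.
   Context: All graphs are finite and simple. For a graph $G$ with $V(G)=\{v_1,\dots,v_n\}$ and an integer $t\ge1$, the generalized Mycielskian $\mu_t(G)$ has vertex set $\{u_i^s: 1\le i\le n,\ 0\le s\le t\}\cup\{w\}$, where $u_i^0$ is identified with $v_i$. Its edges are: $u_i^0u_j^0$ for each edge $v_iv_j$ of $G$; $u_i^su_j^{s+1}$ and $u_j^su_i^{s+1}$ for each edge $v_iv_j$ of $G$ and each $0\le s<t$; and $u_i^tw$ for all $1\le i\le n$. A set $S\subseteq V(G)$ is a determining set for $G$ if the only automorphism of $G$ fixing every vertex of $S$ is the identity; $\det(G)$ is the minimum size of a determining set. Two vertices are twins if they have the same open neighborhood. A minimum twin cover of a graph is a subset of its vertices of minimum size that contains at least one vertex from every pair of distinct twin vertices; it is empty if the graph has no twins. *)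

theory Defs
  imports Main
begin

definition simple_graph :: "'a set \<Rightarrow> 'a set set \<Rightarrow> bool" where
  "simple_graph V E \<longleftrightarrow> finite V \<and>
     (\<forall>e\<in>E. \<exists>u v. u \<noteq> v \<and> u \<in> V \<and> v \<in> V \<and> e = {u, v})"

definition isolated_vertex :: "'a set \<Rightarrow> 'a set set \<Rightarrow> 'a \<Rightarrow> bool" where
  "isolated_vertex V E v \<longleftrightarrow> v \<in> V \<and> (\<forall>u\<in>V. {u, v} \<notin> E)"

definition graph_aut :: "'a set \<Rightarrow> 'a set set \<Rightarrow> ('a \<Rightarrow> 'a) \<Rightarrow> bool" where
  "graph_aut V E f \<longleftrightarrow> bij_betw f V V \<and>
     (\<forall>u\<in>V. \<forall>v\<in>V. {u, v} \<in> E \<longleftrightarrow> {f u, f v} \<in> E)"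

definition determining_set :: "'a set \<Rightarrow> 'a set set \<Rightarrow> 'a set \<Rightarrow> bool" where
  "determining_set V E S \<longleftrightarrow> S \<subseteq> V \<and>
     (\<forall>f. graph_aut V E f \<and> (\<forall>x\<in>S. f x = x) \<longrightarrow> (\<forall>x\<in>V. f x = x))"

definition det_num :: "'a set \<Rightarrow> 'a set set \<Rightarrow> nat" where
  "det_num V E = Min {card S | S. determining_set V E S}"

definition open_nbhd :: "'a set \<Rightarrow> 'a set set \<Rightarrow> 'a \<Rightarrow> 'a set" where
  "open_nbhd V E v = {u \<in> V. {u, v} \<in> E}"

definition twins :: "'a set \<Rightarrow> 'a set set \<Rightarrow> 'a \<Rightarrow> 'a \<Rightarrow> bool" where
  "twins V E u v \<longleftrightarrow> u \<in> V \<and> v \<in> V \<and> open_nbhd V E u = open_nbhd V E v"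

definition twin_cover :: "'a set \<Rightarrow> 'a set set \<Rightarrow> 'a set \<Rightarrow> bool" where
  "twin_cover V E T \<longleftrightarrow> T \<subseteq> V \<and>
     (\<forall>u v. u \<noteq> v \<and> twins V E u v \<longrightarrow> u \<in> T \<or> v \<in> T)"

definition min_twin_cover :: "'a set \<Rightarrow> 'a set set \<Rightarrow> 'a set \<Rightarrow> bool" where
  "min_twin_cover V E T \<longleftrightarrow> twin_cover V E T \<and>
     (\<forall>T'. twin_cover V E T' \<longrightarrow> card T \<le> card T')"

text \<open>Generalized Mycielskian. Vertex u_i^s is represented as Some (v_i, s),
and the extra vertex w as None; u_i^0 = Some (v_i, 0) plays the role of v_i.\<close>

definition myc_vertices :: "nat \<Rightarrow> 'a set \<Rightarrow> ('a \<times> nat) option set" where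
  "myc_vertices t V = {Some (v, s) | v s. v \<in> V \<and> s \<le> t} \<union> {None}"

definition myc_edges :: "nat \<Rightarrow> 'a set \<Rightarrow> 'a set set \<Rightarrow> ('a \<times> nat) option set set" where
  "myc_edges t V E =
     {{Some (u, 0), Some (v, 0)} | u v. {u, v} \<in> E}
   \<union> {{Some (u, s), Some (v, Suc s)} | u v s. {u, v} \<in> E \<and> s < t}
   \<union> {{Some (u, t), None} | u. u \<in> V}"

end

theory Submission
  imports Defs "HOL-Combinatorics.Transposition"
begin

text \<open>
Let I be the set of isolated vertices of G and w the apex of the Mycielskian. Isolated
vertices are pairwise twins, so the minimum twin cover T contains all of them but one, c.

The copies of isolated vertices below level t have no neighbours and those on
level t are pendant at w, so a determining set S misses at most one vertex of each of these
two twin classes. Twins of G lift to twins on every level, hence the non-isolated vertices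
with a twin that S picks on one level, together with I - {c}, form a twin cover of G. An
automorphism g of G fixing I - {c}, the vertices S picks on level 0 and the twin-free ones it
picks on higher levels therefore fixes a twin cover, and it lifts to an automorphism of the
Mycielskian that acts as g on level 0 and, on higher levels, as the identity on vertices
with a twin and as g elsewhere. This lift fixes S, so g is the identity. Counting gives
t |T| + det G + t - 1 as a lower bound.

Let D be a minimum determining set of G. An automorphism fixing D on level 0,
T on levels 1..t and c on levels 1..t-1 fixes all copies of isolated vertices, hence w (the
only vertex that is the unique neighbour of another one), hence the distance to w and so
every level. On level 0 it restricts to an automorphism of G fixing D; on each higher level
it can only move a vertex to a twin, which T forbids.
\<close>

lemma twins_iff:
  "twins V E u v \<longleftrightarrow> u \<in> V \<and> v \<in> V \<and> (\<forall>a\<in>V. {a, u} \<in> E \<longleftrightarrow> {a, v} \<in> E)"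
  unfolding twins_def open_nbhd_def by blast

lemma twins_sym: "twins V E u v \<Longrightarrow> twins V E v u"
  unfolding twins_def by auto

lemma graph_aut_edge_iff:
  "graph_aut V E f \<Longrightarrow> u \<in> V \<Longrightarrow> v \<in> V \<Longrightarrow> {f u, f v} \<in> E \<longleftrightarrow> {u, v} \<in> E"
  unfolding graph_aut_def by blast

lemma graph_aut_in: "graph_aut V E f \<Longrightarrow> v \<in> V \<Longrightarrow> f v \<in> V"
  unfolding graph_aut_def bij_betw_def by blast

lemma graph_aut_inj_on: "graph_aut V E f \<Longrightarrow> inj_on f V"
  unfolding graph_aut_def bij_betw_def by blast

lemma graph_aut_image: "graph_aut V E f \<Longrightarrow> f ` V = V"
  unfolding graph_aut_def bij_betw_def by blast

lemma graph_aut_open_nbhd: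
  assumes f: "graph_aut V E f" and v: "v \<in> V"
  shows "open_nbhd V E (f v) = f ` open_nbhd V E v"
proof -
  have "open_nbhd V E (f v) = {u \<in> f ` V. {u, f v} \<in> E}"
    unfolding open_nbhd_def graph_aut_image[OF f] ..
  also have "\<dots> = f ` {u \<in> V. {f u, f v} \<in> E}" by blast
  also have "\<dots> = f ` open_nbhd V E v"
    unfolding open_nbhd_def using graph_aut_edge_iff[OF f _ v] by auto
  finally show ?thesis .
qed

lemma graph_aut_twins_iff:
  assumes f: "graph_aut V E f" and "u \<in> V" "v \<in> V"
  shows "twins V E (f u) (f v) \<longleftrightarrow> twins V E u v"
proof -
  have "open_nbhd V E u \<subseteq> V" "open_nbhd V E v \<subseteq> V" unfolding open_nbhd_def by auto
  then have "f ` open_nbhd V E u = f ` open_nbhd V E v \<longleftrightarrow> open_nbhd V E u = open_nbhd V E v"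
    using graph_aut_inj_on[OF f] by (simp add: inj_on_image_eq_iff)
  then show ?thesis
    using assms graph_aut_open_nbhd[OF f] graph_aut_in[OF f] unfolding twins_def by simp
qed

lemma graph_aut_of_bij_betw:
  assumes "finite V" "inj_on f V" "f ` V \<subseteq> V"
    and "\<And>u v. u \<in> V \<Longrightarrow> v \<in> V \<Longrightarrow> {f u, f v} \<in> E \<longleftrightarrow> {u, v} \<in> E"
  shows "graph_aut V E f"
  using assms endo_inj_surj unfolding graph_aut_def bij_betw_def by metis

lemma graph_aut_transpose:
  assumes "x \<in> V" "y \<in> V" and same: "\<forall>z\<in>V - {x, y}. {z, x} \<in> E \<longleftrightarrow> {z, y} \<in> E"
    and loopless: "\<forall>z. {z} \<notin> E"
  shows "graph_aut V E (transpose x y)"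
  unfolding graph_aut_def
proof
  show "bij_betw (transpose x y) V V" using assms by simp
  have swap_end: "{transpose x y u, v} \<in> E"
    if "u \<in> {x, y}" "v \<in> V - {x, y}" "{u, v} \<in> E" for u v
    using that same by (auto simp: insert_commute)
  have edge: "{transpose x y u, transpose x y v} \<in> E"
    if uv: "u \<in> V" "v \<in> V" "{u, v} \<in> E" for u v
  proof -
    consider "u \<in> {x, y}" "v \<in> {x, y}" | "u \<in> {x, y}" "v \<notin> {x, y}"
      | "u \<notin> {x, y}" "v \<in> {x, y}" | "u \<notin> {x, y}" "v \<notin> {x, y}"
      by blast
    then show ?thesis
    proof cases
      case 1
      moreover have "u \<noteq> v" using uv loopless by auto
      ultimately have "{transpose x y u, transpose x y v} = {u, v}" by auto
      then show ?thesis using uv by simp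
    next
      case 2
      then show ?thesis using swap_end[of u v] uv by simp
    next
      case 3
      then show ?thesis using swap_end[of v u] uv by (simp add: insert_commute)
    qed (use uv in simp)
  qed
  have "transpose x y z \<in> V" if "z \<in> V" for z
    using that assms by (auto simp: transpose_def)
  then show "\<forall>u\<in>V. \<forall>v\<in>V. {u, v} \<in> E \<longleftrightarrow> {transpose x y u, transpose x y v} \<in> E"
    using edge by (metis transpose_involutory)
qed

lemma determining_set_meets_pair:
  assumes S: "determining_set V E S" and "x \<in> V" "y \<in> V" "x \<noteq> y"
    and "\<forall>z\<in>V - {x, y}. {z, x} \<in> E \<longleftrightarrow> {z, y} \<in> E" "\<forall>z. {z} \<notin> E"
  shows "x \<in> S \<or> y \<in> S"
proof (rule ccontr)
  assume "\<not> (x \<in> S \<or> y \<in> S)"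
  then have "\<forall>z\<in>S. transpose x y z = z" by (metis transpose_apply_other)
  with S graph_aut_transpose[OF assms(2,3,5,6)] have "transpose x y x = x"
    using \<open>x \<in> V\<close> unfolding determining_set_def by blast
  with \<open>x \<noteq> y\<close> show False by simp
qed

lemma determining_set_meets_twins:
  assumes "determining_set V E S" "twins V E x y" "x \<noteq> y" "\<forall>z. {z} \<notin> E"
  shows "x \<in> S \<or> y \<in> S"
  using assms by (intro determining_set_meets_pair) (auto simp: twins_iff)

lemma card_le_Suc_card_Int:
  assumes "finite A" and "\<And>x y. x \<in> A \<Longrightarrow> y \<in> A \<Longrightarrow> x \<noteq> y \<Longrightarrow> x \<in> S \<or> y \<in> S"
  shows "card A \<le> Suc (card (A \<inter> S))"
proof -
  have "card (A - S) \<le> 1"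
    using assms by (auto simp: card_le_Suc0_iff_eq)
  moreover have "card A = card (A \<inter> S) + card (A - S)"
    using assms(1) by (metis card_Int_Diff)
  ultimately show ?thesis by simp
qed

lemma card_twin_class_le_Suc:
  assumes "determining_set V E S" "\<forall>z. {z} \<notin> E" "finite A"
    and "\<And>x y. x \<in> A \<Longrightarrow> y \<in> A \<Longrightarrow> twins V E x y"
  shows "card A \<le> Suc (card (A \<inter> S))"
  using assms determining_set_meets_twins by (metis card_le_Suc_card_Int)

lemma fixed_if_at_most_one_moved:
  assumes "f ` A \<subseteq> A" "inj_on f A"
    and "\<And>x y. x \<in> A \<Longrightarrow> y \<in> A \<Longrightarrow> x \<noteq> y \<Longrightarrow> f x = x \<or> f y = y"
    and "x \<in> A"
  shows "f x = x"
proof (rule ccontr)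
  assume moved: "f x \<noteq> x"
  with assms have "f (f x) = f x" by blast
  with assms moved show False by (meson image_subset_iff inj_onD)
qed

lemma determining_set_self: "determining_set V E V"
  unfolding determining_set_def by auto

lemma finite_determining_cards:
  "finite V \<Longrightarrow> finite {card S | S. determining_set V E S}"
proof -
  assume "finite V"
  moreover have "{card S | S. determining_set V E S} \<subseteq> card ` Pow V"
    unfolding determining_set_def by auto
  ultimately show ?thesis using finite_subset by blast
qed

lemma det_num_le: "finite V \<Longrightarrow> determining_set V E S \<Longrightarrow> det_num V E \<le> card S"
  unfolding det_num_def by (rule Min_le) (auto intro: finite_determining_cards)

lemma det_num_attained: "finite V \<Longrightarrow> \<exists>S. determining_set V E S \<and> card S = det_num V E"
proof -
  assume "finite V"
  then have "det_num V E \<in> {card S | S. determining_set V E S}"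
    unfolding det_num_def using determining_set_self[of V E]
    by (intro Min_in finite_determining_cards) auto
  then show ?thesis by auto
qed

lemma det_num_eqI:
  assumes "finite V" "determining_set V E S" "card S = n"
    and "\<And>S'. determining_set V E S' \<Longrightarrow> n \<le> card S'"
  shows "det_num V E = n"
  using assms det_num_le det_num_attained by (metis le_antisym)

definition has_twin :: "'a set \<Rightarrow> 'a set set \<Rightarrow> 'a \<Rightarrow> bool" where
  "has_twin V E v \<longleftrightarrow> (\<exists>u. u \<noteq> v \<and> twins V E u v)"

lemma graph_aut_has_twin:
  assumes g: "graph_aut V E g" and v: "v \<in> V"
  shows "has_twin V E (g v) \<longleftrightarrow> has_twin V E v"
proof -
  have "has_twin V E (g v) \<longleftrightarrow> (\<exists>u\<in>g ` V. u \<noteq> g v \<and> twins V E u (g v))"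
    unfolding has_twin_def twins_def using graph_aut_image[OF g] by auto
  also have "\<dots> \<longleftrightarrow> (\<exists>u\<in>V. g u \<noteq> g v \<and> twins V E (g u) (g v))"
    by blast
  also have "\<dots> \<longleftrightarrow> (\<exists>u\<in>V. u \<noteq> v \<and> twins V E u v)"
    using graph_aut_twins_iff[OF g _ v] inj_on_eq_iff[OF graph_aut_inj_on[OF g] _ v] by auto
  also have "\<dots> \<longleftrightarrow> has_twin V E v"
    unfolding has_twin_def twins_def by blast
  finally show ?thesis .
qed

lemma graph_aut_fixing_twin_cover:
  assumes g: "graph_aut V E g" and C: "twin_cover V E C" "\<forall>x\<in>C. g x = x"
    and v: "has_twin V E v"
  shows "open_nbhd V E (g v) = open_nbhd V E v"
proof -
  obtain u where u: "u \<noteq> v" "twins V E u v" using v unfolding has_twin_def by blast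
  then have "u \<in> C \<or> v \<in> C" using C(1) unfolding twin_cover_def by blast
  then show ?thesis
  proof
    assume "u \<in> C"
    with u C(2) have "twins V E u (g v)"
      using graph_aut_twins_iff[OF g, of u v] u(2) unfolding twins_def by auto
    with u(2) show ?thesis unfolding twins_def by simp
  qed (use C(2) in simp)
qed

lemma graph_aut_of_same_open_nbhd:
  assumes g: "graph_aut V E g" and h: "bij_betw h V V"
    and same: "\<And>v. v \<in> V \<Longrightarrow> open_nbhd V E (h v) = open_nbhd V E (g v)"
  shows "graph_aut V E h"
  unfolding graph_aut_def
proof (intro conjI h ballI)
  have in_V: "h v \<in> V" "g v \<in> V" if "v \<in> V" for v
    using that h graph_aut_in[OF g] bij_betwE by blast+
  fix u v assume uv: "u \<in> V" "v \<in> V"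
  have "{h u, h v} \<in> E \<longleftrightarrow> h u \<in> open_nbhd V E (h v)"
    using in_V uv unfolding open_nbhd_def by auto
  also have "\<dots> \<longleftrightarrow> h u \<in> open_nbhd V E (g v)" using same uv by simp
  also have "\<dots> \<longleftrightarrow> g v \<in> open_nbhd V E (h u)"
    using in_V uv unfolding open_nbhd_def by (auto simp: insert_commute)
  also have "\<dots> \<longleftrightarrow> g v \<in> open_nbhd V E (g u)" using same uv by simp
  also have "\<dots> \<longleftrightarrow> {g u, g v} \<in> E"
    using in_V uv unfolding open_nbhd_def by (auto simp: insert_commute)
  also have "\<dots> \<longleftrightarrow> {u, v} \<in> E" using graph_aut_edge_iff[OF g uv] .
  finally show "{u, v} \<in> E \<longleftrightarrow> {h u, h v} \<in> E" by simp
qed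

lemma graph_aut_twin_retraction:
  assumes V: "finite V" and g: "graph_aut V E g"
    and C: "twin_cover V E C" "\<forall>x\<in>C. g x = x"
  defines "h \<equiv> \<lambda>v. if has_twin V E v then v else g v"
  shows "graph_aut V E h" and "v \<in> V \<Longrightarrow> open_nbhd V E (h v) = open_nbhd V E (g v)"
proof -
  have same: "open_nbhd V E (h v) = open_nbhd V E (g v)" for v
    unfolding h_def using graph_aut_fixing_twin_cover[OF g C] by simp
  then show "v \<in> V \<Longrightarrow> open_nbhd V E (h v) = open_nbhd V E (g v)" .
  have h_in: "h v \<in> V" if "v \<in> V" for v
    unfolding h_def using that graph_aut_in[OF g] by simp
  have "inj_on h V"
  proof (rule inj_onI)
    fix u v assume uv: "u \<in> V" "v \<in> V" "h u = h v"
    have twin_g: "has_twin V E (g w) \<longleftrightarrow> has_twin V E w" if "w \<in> V" for w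
      using graph_aut_has_twin[OF g that] .
    show "u = v"
      using uv twin_g[of u] twin_g[of v] inj_onD[OF graph_aut_inj_on[OF g] _ uv(1,2)]
      unfolding h_def by (auto split: if_splits)
  qed
  then have "bij_betw h V V"
    using V h_in endo_inj_surj unfolding bij_betw_def by (metis image_subsetI)
  then show "graph_aut V E h" using graph_aut_of_same_open_nbhd[OF g] same by blast
qed

definition graph_ball :: "'a set \<Rightarrow> 'a set set \<Rightarrow> 'a \<Rightarrow> nat \<Rightarrow> 'a set" where
  "graph_ball V E w k = ((\<lambda>A. A \<union> \<Union> (open_nbhd V E ` A)) ^^ k) {w}"

lemma graph_ball_0 [simp]: "graph_ball V E w 0 = {w}"
  unfolding graph_ball_def by simp

lemma graph_ball_Suc:
  "graph_ball V E w (Suc k) = graph_ball V E w k \<union> \<Union> (open_nbhd V E ` graph_ball V E w k)"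
  unfolding graph_ball_def by simp

lemma graph_ball_subset: "w \<in> V \<Longrightarrow> graph_ball V E w k \<subseteq> V"
  by (induction k) (auto simp: graph_ball_Suc open_nbhd_def)

lemma graph_aut_graph_ball:
  assumes f: "graph_aut V E f" and w: "w \<in> V" "f w = w"
  shows "f ` graph_ball V E w k = graph_ball V E w k"
proof (induction k)
  case (Suc k)
  have "f ` \<Union> (open_nbhd V E ` graph_ball V E w k) = (\<Union>x\<in>graph_ball V E w k. open_nbhd V E (f x))"
    using graph_aut_open_nbhd[OF f] graph_ball_subset[OF w(1)] by (simp add: image_UN subset_iff)
  also have "\<dots> = \<Union> (open_nbhd V E ` f ` graph_ball V E w k)"
    by (simp add: image_image)
  finally show ?case using Suc.IH by (simp add: graph_ball_Suc image_Un)
qed (simp add: w)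

lemma graph_ball_Suc_eqI:
  assumes "graph_ball V E w k = insert w A"
    and "\<Union> (open_nbhd V E ` insert w A) \<subseteq> insert w A'"
    and "A' \<subseteq> A \<union> \<Union> (open_nbhd V E ` A)" and "A \<subseteq> A'"
  shows "graph_ball V E w (Suc k) = insert w A'"
  using assms(2-) unfolding graph_ball_Suc assms(1) by (auto 0 3)

locale mycielskian =
  fixes V :: "'a set" and E :: "'a set set" and t :: nat
  assumes simple: "simple_graph V E" and t_pos: "t \<ge> 1"
begin

abbreviation "VM \<equiv> myc_vertices t V"
abbreviation "EM \<equiv> myc_edges t V E"

lemma finite_V: "finite V"
  using simple unfolding simple_graph_def by blast

lemma edge_in_V: "{u, v} \<in> E \<Longrightarrow> u \<in> V \<and> v \<in> V \<and> u \<noteq> v"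
  using simple unfolding simple_graph_def by (metis doubleton_eq_iff)

lemma loopless: "{v} \<notin> E"
  using edge_in_V[of v v] by auto

lemma finite_VM: "finite VM"
proof -
  have "VM = Some ` (V \<times> {..t}) \<union> {None}" unfolding myc_vertices_def by auto
  then show ?thesis using finite_V by simp
qed

lemma Some_in_VM [simp]: "Some (v, s) \<in> VM \<longleftrightarrow> v \<in> V \<and> s \<le> t"
  unfolding myc_vertices_def by auto

lemma None_in_VM [simp]: "None \<in> VM"
  unfolding myc_vertices_def by auto

lemma VM_cases [consumes 1, case_names None Some]:
  assumes "x \<in> VM" and "x = None \<Longrightarrow> P"
    and "\<And>v s. x = Some (v, s) \<Longrightarrow> v \<in> V \<Longrightarrow> s \<le> t \<Longrightarrow> P"
  shows P
  using assms unfolding myc_vertices_def by blast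

lemma EM_Some_Some:
  "{Some (u, r), Some (v, s)} \<in> EM \<longleftrightarrow>
     {u, v} \<in> E \<and> (r = 0 \<and> s = 0 \<or> s = Suc r \<and> r < t \<or> r = Suc s \<and> s < t)"
proof
  assume "{Some (u, r), Some (v, s)} \<in> EM"
  then show "{u, v} \<in> E \<and> (r = 0 \<and> s = 0 \<or> s = Suc r \<and> r < t \<or> r = Suc s \<and> s < t)"
    unfolding myc_edges_def by (auto simp: doubleton_eq_iff insert_commute)
next
  assume "{u, v} \<in> E \<and> (r = 0 \<and> s = 0 \<or> s = Suc r \<and> r < t \<or> r = Suc s \<and> s < t)"
  moreover have "{v, u} \<in> E \<longleftrightarrow> {u, v} \<in> E" by (simp add: insert_commute)
  ultimately show "{Some (u, r), Some (v, s)} \<in> EM"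
    unfolding myc_edges_def by (elim conjE disjE) (blast, blast, force simp: insert_commute)
qed

lemma EM_Some_None: "{Some (u, r), None} \<in> EM \<longleftrightarrow> u \<in> V \<and> r = t"
  unfolding myc_edges_def by (auto simp: doubleton_eq_iff)

lemma EM_None_Some: "{None, Some (u, r)} \<in> EM \<longleftrightarrow> u \<in> V \<and> r = t"
  using EM_Some_None by (simp add: insert_commute)

lemma EM_loopless: "{x} \<notin> EM"
proof -
  have "card e = 2" if "e \<in> EM" for e
    using that edge_in_V unfolding myc_edges_def by auto
  from this[of "{x}"] show ?thesis by auto
qed

lemma open_nbhd_None: "open_nbhd VM EM None = Some ` (V \<times> {t})"
  unfolding open_nbhd_def myc_vertices_def by (auto simp: EM_Some_None EM_loopless)

lemma Some_in_open_nbhd_Some: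
  "Some (u, r) \<in> open_nbhd VM EM (Some (v, s)) \<longleftrightarrow>
     {u, v} \<in> E \<and> (r = 0 \<and> s = 0 \<or> s = Suc r \<and> r < t \<or> r = Suc s \<and> s < t)"
  using edge_in_V unfolding open_nbhd_def by (auto simp: EM_Some_Some)

lemma None_in_open_nbhd_Some: "None \<in> open_nbhd VM EM (Some (v, s)) \<longleftrightarrow> v \<in> V \<and> s = t"
  unfolding open_nbhd_def by (simp add: EM_None_Some)

lemma twins_Some:
  assumes "twins V E u v" "s \<le> t"
  shows "twins VM EM (Some (u, s)) (Some (v, s))"
proof -
  have "open_nbhd VM EM (Some (u, s)) = open_nbhd VM EM (Some (v, s))"
  proof (rule set_eqI)
    fix y
    show "y \<in> open_nbhd VM EM (Some (u, s)) \<longleftrightarrow> y \<in> open_nbhd VM EM (Some (v, s))"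
    proof (cases y)
      case None
      then show ?thesis using assms(1) by (simp add: None_in_open_nbhd_Some twins_def)
    next
      case (Some p)
      then obtain a r where "y = Some (a, r)" by (cases p) auto
      moreover have "{a, u} \<in> E \<longleftrightarrow> {a, v} \<in> E"
        using assms(1) edge_in_V[of a u] edge_in_V[of a v] unfolding twins_iff by blast
      ultimately show ?thesis
        by (simp add: Some_in_open_nbhd_Some insert_commute)
    qed
  qed
  with assms show ?thesis unfolding twins_def by simp
qed

definition myc_map :: "(nat \<Rightarrow> 'a \<Rightarrow> 'a) \<Rightarrow> ('a \<times> nat) option \<Rightarrow> ('a \<times> nat) option" where
  "myc_map \<sigma> = map_option (\<lambda>(v, s). (\<sigma> s v, s))"

lemma myc_map_simps [simp]:
  "myc_map \<sigma> None = None" "myc_map \<sigma> (Some (v, s)) = Some (\<sigma> s v, s)"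
  unfolding myc_map_def by simp_all

text \<open>Edges between two levels only depend on G-neighbourhoods, so each level may be moved by
  its own automorphism as long as all of them agree on neighbourhoods.\<close>

lemma graph_aut_myc_map:
  assumes aut: "\<And>s. s \<le> t \<Longrightarrow> graph_aut V E (\<sigma> s)"
    and same: "\<And>r s v. r \<le> t \<Longrightarrow> s \<le> t \<Longrightarrow> v \<in> V \<Longrightarrow>
                 open_nbhd V E (\<sigma> r v) = open_nbhd V E (\<sigma> s v)"
  shows "graph_aut VM EM (myc_map \<sigma>)"
proof (rule graph_aut_of_bij_betw[OF finite_VM])
  have in_V: "\<sigma> s v \<in> V" if "s \<le> t" "v \<in> V" for s v
    using graph_aut_in[OF aut] that .
  have cross: "{\<sigma> r u, \<sigma> s v} \<in> E \<longleftrightarrow> {u, v} \<in> E"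
    if "r \<le> t" "s \<le> t" "u \<in> V" "v \<in> V" for r s u v
  proof -
    have "{\<sigma> r u, \<sigma> s v} \<in> E \<longleftrightarrow> \<sigma> r u \<in> open_nbhd V E (\<sigma> s v)"
      using in_V that unfolding open_nbhd_def by auto
    also have "\<dots> \<longleftrightarrow> \<sigma> r u \<in> open_nbhd V E (\<sigma> r v)" using same[of s r v] that by simp
    also have "\<dots> \<longleftrightarrow> {u, v} \<in> E"
      using in_V that graph_aut_edge_iff[OF aut] unfolding open_nbhd_def by auto
    finally show ?thesis .
  qed
  have inj: "u = v" if "\<sigma> s u = \<sigma> s v" "s \<le> t" "u \<in> V" "v \<in> V" for s u v
    using that inj_onD[OF graph_aut_inj_on[OF aut]] by blast
  show "inj_on (myc_map \<sigma>) VM"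
  proof (rule inj_onI)
    fix x y assume "x \<in> VM" "y \<in> VM" "myc_map \<sigma> x = myc_map \<sigma> y"
    then show "x = y" by (elim VM_cases) (auto dest: inj)
  qed
  show "myc_map \<sigma> ` VM \<subseteq> VM"
    using in_V by (auto elim: VM_cases)
  fix x y assume "x \<in> VM" "y \<in> VM"
  then show "{myc_map \<sigma> x, myc_map \<sigma> y} \<in> EM \<longleftrightarrow> {x, y} \<in> EM"
    by (elim VM_cases) (simp_all add: cross in_V EM_Some_Some EM_Some_None EM_None_Some)
qed

definition twin_lift :: "('a \<Rightarrow> 'a) \<Rightarrow> ('a \<times> nat) option \<Rightarrow> ('a \<times> nat) option" where
  "twin_lift g = myc_map (\<lambda>s v. if s = 0 \<or> \<not> has_twin V E v then g v else v)"

lemma graph_aut_twin_lift: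
  assumes g: "graph_aut V E g" and C: "twin_cover V E C" "\<forall>x\<in>C. g x = x"
  shows "graph_aut VM EM (twin_lift g)"
proof -
  define h where "h = (\<lambda>v. if has_twin V E v then v else g v)"
  have h: "graph_aut V E h" "\<And>v. v \<in> V \<Longrightarrow> open_nbhd V E (h v) = open_nbhd V E (g v)"
    using graph_aut_twin_retraction[OF finite_V g C] unfolding h_def by auto
  have "twin_lift g = myc_map (\<lambda>s. if s = 0 then g else h)"
    unfolding twin_lift_def h_def by (rule arg_cong[where f = myc_map]) (simp add: fun_eq_iff)
  moreover have "graph_aut VM EM (myc_map (\<lambda>s. if s = 0 then g else h))"
    using g h by (intro graph_aut_myc_map) auto
  ultimately show ?thesis by simp
qed

lemma open_nbhd_Some_isolated:
  assumes "i \<in> V" "open_nbhd V E i = {}"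
  shows "open_nbhd VM EM (Some (i, s)) = (if s = t then {None} else {})"
proof -
  have "{u, i} \<notin> E" for u
    using assms edge_in_V[of u i] unfolding open_nbhd_def by blast
  with \<open>i \<in> V\<close> show ?thesis
    unfolding open_nbhd_def by (auto elim: VM_cases simp: EM_Some_Some EM_None_Some)
qed

context
  fixes a assumes V: "V = {a}"
begin

lemma singleton_vertex: "a \<in> V"
  using V by simp

lemma singleton_unique: "v \<in> V \<Longrightarrow> v = a"
  using V by simp

lemma singleton_open_nbhd: "open_nbhd VM EM (Some (a, s)) = (if s = t then {None} else {})"
proof -
  have "open_nbhd V E a = {}"
    using V edge_in_V unfolding open_nbhd_def by blast
  then show ?thesis using open_nbhd_Some_isolated[OF singleton_vertex] by simp
qed

lemma determining_set_singleton:
  "determining_set VM EM (Some ` ({a} \<times> {1..t}))" (is "determining_set VM EM ?S")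
  unfolding determining_set_def
proof (intro conjI allI impI)
  show "?S \<subseteq> VM" using singleton_vertex by auto
  fix f assume f: "graph_aut VM EM f \<and> (\<forall>x\<in>?S. f x = x)"
  then have "f (Some (a, t)) = Some (a, t)" using t_pos by auto
  then have "{f None} = {None}"
    using graph_aut_open_nbhd[of VM EM f "Some (a, t)"] f singleton_vertex singleton_open_nbhd[of t]
    by simp
  then have fN: "f None = None" by simp
  have fixed: "f x = x" if "x \<in> VM" "x \<noteq> Some (a, 0)" for x
    using that(1)
  proof (cases x rule: VM_cases)
    case (Some v s)
    moreover have "v = a" using Some(2) by (rule singleton_unique)
    ultimately have "x \<in> ?S" using that by auto
    then show ?thesis using f by blast
  qed (simp add: fN)
  show "\<forall>x\<in>VM. f x = x"
  proof
    fix x assume "x \<in> VM"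
    show "f x = x"
    proof (rule fixed_if_at_most_one_moved[of f VM])
      show "f ` VM \<subseteq> VM" using f graph_aut_in[of VM EM f] by blast
      show "inj_on f VM" using f graph_aut_inj_on by blast
    qed (use fixed \<open>x \<in> VM\<close> in blast)+
  qed
qed

lemma card_determining_set_singleton_ge:
  assumes S: "determining_set VM EM S"
  shows "t \<le> card S"
proof -
  have "finite S"
    using S finite_subset[OF _ finite_VM] unfolding determining_set_def by blast
  let ?Iso = "Some ` ({a} \<times> {..<t})"
  have "card ?Iso \<le> Suc (card (?Iso \<inter> S))"
    using singleton_vertex singleton_open_nbhd
    by (intro card_twin_class_le_Suc[OF S]) (auto simp: EM_loopless twins_def)
  moreover have "Some (a, t) \<in> S \<or> None \<in> S"
  proof (rule determining_set_meets_pair[OF S])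
    show "\<forall>z\<in>VM - {Some (a, t), None}. {z, Some (a, t)} \<in> EM \<longleftrightarrow> {z, None} \<in> EM"
    proof
      fix z assume z: "z \<in> VM - {Some (a, t), None}"
      then have "z \<in> VM" by blast
      then have "open_nbhd VM EM z = {}"
      proof (cases z rule: VM_cases)
        case (Some v s)
        moreover have "v = a" using Some(2) by (rule singleton_unique)
        ultimately show ?thesis using z singleton_open_nbhd[of s] by auto
      qed (use z in simp)
      then have "\<forall>u\<in>VM. {u, z} \<notin> EM" unfolding open_nbhd_def by simp
      then have "{Some (a, t), z} \<notin> EM" "{None, z} \<notin> EM"
        using singleton_vertex by simp_all
      then show "{z, Some (a, t)} \<in> EM \<longleftrightarrow> {z, None} \<in> EM"
        by (simp add: insert_commute)
    qed
  qed (use singleton_vertex EM_loopless in auto)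
  then have "card ({Some (a, t), None} \<inter> S) \<ge> 1"
    by (auto simp: Suc_le_eq card_gt_0_iff)
  moreover have "card (?Iso \<inter> S) + card ({Some (a, t), None} \<inter> S) \<le> card S"
    using \<open>finite S\<close> by (subst card_Un_disjoint[symmetric]) (auto intro: card_mono)
  ultimately show "t \<le> card S" by (simp add: card_image card_cartesian_product)
qed

lemma det_num_singleton: "det_num V E = 0" "det_num VM EM = t"
proof -
  have "determining_set V E {}"
    using V by (auto simp: determining_set_def graph_aut_def bij_betw_def)
  then show "det_num V E = 0" by (rule det_num_eqI[OF finite_V]) auto
  show "det_num VM EM = t"
    using determining_set_singleton card_determining_set_singleton_ge
    by (intro det_num_eqI[OF finite_VM]) (auto simp: card_image card_cartesian_product)
qed

end

end

locale mycielskian_isolated = mycielskian +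
  fixes T :: "'a set"
  assumes has_isolated: "\<exists>v. isolated_vertex V E v"
    and min_cover: "min_twin_cover V E T"
    and not_singleton: "card V \<noteq> 1"
begin

definition I :: "'a set" where
  "I = {v \<in> V. open_nbhd V E v = {}}"

lemma I_subset: "I \<subseteq> V"
  unfolding I_def by blast

lemma finite_I: "finite I"
  using I_subset finite_V finite_subset by blast

lemma I_nonempty: "I \<noteq> {}"
  using has_isolated edge_in_V unfolding I_def isolated_vertex_def open_nbhd_def by blast

lemma I_no_edge: "{u, i} \<notin> E" if "i \<in> I"
  using that edge_in_V unfolding I_def open_nbhd_def by blast

lemma non_isolated_neighbour:
  assumes "v \<in> V" "v \<notin> I"
  obtains u where "u \<in> V - I" "{u, v} \<in> E"
proof -
  obtain u where "{u, v} \<in> E" using assms unfolding I_def open_nbhd_def by blast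
  moreover from this have "u \<in> V - I"
    using edge_in_V I_no_edge[of u v] by (auto simp: insert_commute)
  ultimately show thesis using that by blast
qed

lemma twins_I_iff: "twins V E u v \<Longrightarrow> u \<in> I \<longleftrightarrow> v \<in> I"
  unfolding twins_def I_def by auto

lemma I_twins: "i \<in> I \<Longrightarrow> j \<in> I \<Longrightarrow> twins V E i j"
  unfolding twins_def I_def by auto

lemma two_vertices: obtains a b where "a \<in> V" "b \<in> V" "a \<noteq> b"
proof -
  obtain a where "a \<in> V" using I_nonempty I_subset by blast
  moreover have "V \<noteq> {a}" using not_singleton by auto
  ultimately show thesis using that by blast
qed

lemma T_cover: "twin_cover V E T"
  using min_cover unfolding min_twin_cover_def by blast

lemma finite_T: "finite T"
  using T_cover finite_V finite_subset unfolding twin_cover_def by blast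

lemma I_minus_T: "\<exists>c. I - T = {c}"
proof -
  have "\<not> I \<subseteq> T"
  proof
    assume sub: "I \<subseteq> T"
    obtain c where c: "c \<in> I" using I_nonempty by blast
    have "twin_cover V E (T - {c})"
      unfolding twin_cover_def
    proof (intro conjI allI impI)
      show "T - {c} \<subseteq> V" using T_cover unfolding twin_cover_def by blast
      fix u v assume uv: "u \<noteq> v \<and> twins V E u v"
      then have "u \<in> T \<or> v \<in> T" using T_cover unfolding twin_cover_def by blast
      moreover have "u \<in> I \<longleftrightarrow> v \<in> I" using uv twins_I_iff by blast
      ultimately show "u \<in> T - {c} \<or> v \<in> T - {c}" using sub uv c by blast
    qed
    then have "card T \<le> card (T - {c})" using min_cover unfolding min_twin_cover_def by blast
    moreover have "card (T - {c}) < card T" using c sub finite_T by (meson card_Diff1_less subsetD)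
    ultimately show False by simp
  qed
  then obtain c where "c \<in> I - T" by blast
  moreover have "i = c" if "i \<in> I - T" for i
    using that calculation T_cover I_twins unfolding twin_cover_def by blast
  ultimately show ?thesis by blast
qed

lemma open_nbhd_Some_I:
  "i \<in> I \<Longrightarrow> open_nbhd VM EM (Some (i, s)) = (if s = t then {None} else {})"
  using open_nbhd_Some_isolated I_subset unfolding I_def by blast

lemma two_neighbours:
  assumes v: "v \<in> V - I" and "s \<le> t"
  obtains y y' where "y \<noteq> y'" "y \<in> open_nbhd VM EM (Some (v, s))" "y' \<in> open_nbhd VM EM (Some (v, s))"
proof -
  obtain u where u: "{u, v} \<in> E" using v non_isolated_neighbour by blast
  consider "s = t" | "s < t" "s = 0" | r where "s < t" "s = Suc r"
    using \<open>s \<le> t\<close> by (cases s) force+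
  then show thesis
  proof cases
    case 1
    then show thesis
      using that[of "Some (u, t - 1)" None] u v t_pos
      by (simp add: Some_in_open_nbhd_Some None_in_open_nbhd_Some)
  next
    case 2
    then show thesis
      using that[of "Some (u, 0)" "Some (u, 1)"] u by (simp add: Some_in_open_nbhd_Some)
  next
    case 3
    then show thesis
      using that[of "Some (u, r)" "Some (u, Suc s)"] u by (simp add: Some_in_open_nbhd_Some)
  qed
qed

lemma open_nbhd_empty_iff:
  assumes "x \<in> VM"
  shows "open_nbhd VM EM x = {} \<longleftrightarrow> (\<exists>i\<in>I. \<exists>s<t. x = Some (i, s))"
  using assms
proof (cases x rule: VM_cases)
  case None
  then show ?thesis using open_nbhd_None two_vertices by fastforce
next
  case (Some v s)
  then show ?thesis
    using open_nbhd_Some_I[of v s] two_neighbours[of v s] by (cases "v \<in> I") auto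
qed

lemma open_nbhd_singleton:
  assumes "x \<in> VM" "open_nbhd VM EM x = {y}"
  shows "y = None \<and> (\<exists>i\<in>I. x = Some (i, t))"
  using assms(1)
proof (cases x rule: VM_cases)
  case None
  obtain a b where "a \<in> V" "b \<in> V" "a \<noteq> b" by (rule two_vertices)
  then have "Some (a, t) \<in> open_nbhd VM EM x" "Some (b, t) \<in> open_nbhd VM EM x"
    using None open_nbhd_None by auto
  with assms(2) \<open>a \<noteq> b\<close> show ?thesis by auto
next
  case (Some v s)
  then show ?thesis
    using assms(2) open_nbhd_Some_I[of v s] two_neighbours[of v s]
    by (cases "v \<in> I") (auto split: if_splits)
qed

text \<open>A non-isolated copy (v, s) is at distance t + 1 - s from w, a copy of an isolated vertex
  is at distance 1 or unreachable.\<close>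

definition top_layers :: "nat \<Rightarrow> ('a \<times> nat) option set" where
  "top_layers k = Some ` {(v, s). v \<in> V \<and> s \<le> t \<and> (s = t \<or> v \<notin> I \<and> t < s + k)}"

lemma open_nbhd_top_layers:
  "\<Union> (open_nbhd VM EM ` insert None (top_layers (Suc k))) \<subseteq> insert None (top_layers (Suc (Suc k)))"
proof
  fix y assume "y \<in> \<Union> (open_nbhd VM EM ` insert None (top_layers (Suc k)))"
  then obtain x where x: "x \<in> insert None (top_layers (Suc k))" "y \<in> open_nbhd VM EM x" by blast
  show "y \<in> insert None (top_layers (Suc (Suc k)))"
  proof (cases x)
    case None
    then show ?thesis using x open_nbhd_None unfolding top_layers_def by auto
  next
    case (Some p)
    then obtain v s where vs: "x = Some (v, s)" "v \<in> V" "s \<le> t" "s = t \<or> v \<notin> I \<and> t < s + Suc k"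
      using x(1) unfolding top_layers_def by auto
    have "y \<in> VM" using x(2) unfolding open_nbhd_def by blast
    then show ?thesis
    proof (cases y rule: VM_cases)
      case (Some u r)
      then have "{u, v} \<in> E" "s \<le> Suc r"
        using x(2) vs(1) by (auto simp: Some_in_open_nbhd_Some)
      moreover have "u \<notin> I" using \<open>{u, v} \<in> E\<close> I_no_edge[of u v] by (auto simp: insert_commute)
      ultimately show ?thesis using Some vs unfolding top_layers_def by auto
    qed simp
  qed
qed

lemma top_layers_Suc_subset:
  "top_layers (Suc k) \<subseteq> top_layers k \<union> \<Union> (open_nbhd VM EM ` top_layers k)"
proof
  fix y assume "y \<in> top_layers (Suc k)"
  then obtain v s where y: "y = Some (v, s)" "v \<in> V" "s \<le> t" "s = t \<or> v \<notin> I \<and> t < s + Suc k"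
    unfolding top_layers_def by auto
  show "y \<in> top_layers k \<union> \<Union> (open_nbhd VM EM ` top_layers k)"
  proof (cases "s = t \<or> t < s + k")
    case False
    then have "v \<in> V - I" "s < t" using y by auto
    then obtain u where u: "u \<in> V - I" "{u, v} \<in> E" by (meson non_isolated_neighbour DiffE)
    then have "Some (u, Suc s) \<in> top_layers k"
      using \<open>s < t\<close> False y unfolding top_layers_def by auto
    moreover have "y \<in> open_nbhd VM EM (Some (u, Suc s))"
      using u y \<open>s < t\<close> by (simp add: Some_in_open_nbhd_Some insert_commute)
    ultimately show ?thesis by blast
  qed (use y in \<open>auto simp: top_layers_def\<close>)
qed

lemma graph_ball_None: "graph_ball VM EM None (Suc k) = insert None (top_layers (Suc k))"
proof (induction k)
  case 0
  show ?case by (auto simp: graph_ball_Suc open_nbhd_None top_layers_def)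
next
  case (Suc k)
  have "top_layers (Suc k) \<subseteq> top_layers (Suc (Suc k))" unfolding top_layers_def by auto
  with Suc.IH open_nbhd_top_layers top_layers_Suc_subset show ?case
    by (rule graph_ball_Suc_eqI)
qed

lemma Some_in_graph_ball_None:
  "Some (u, r) \<in> graph_ball VM EM None k \<longleftrightarrow>
     0 < k \<and> u \<in> V \<and> r \<le> t \<and> (r = t \<or> u \<notin> I \<and> t < r + k)"
  by (cases k) (auto simp: graph_ball_None top_layers_def)

lemma None_in_graph_ball: "None \<in> graph_ball VM EM None k"
  by (cases k) (simp_all add: graph_ball_None)

context
  fixes f :: "('a \<times> nat) option \<Rightarrow> ('a \<times> nat) option" and D :: "'a set" and c :: 'a
  assumes aut: "graph_aut VM EM f"
    and D: "determining_set V E D"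
    and c: "I - T = {c}"
    and fixes_D: "\<And>v. v \<in> D \<Longrightarrow> f (Some (v, 0)) = Some (v, 0)"
    and fixes_T: "\<And>v s. v \<in> T \<Longrightarrow> 1 \<le> s \<Longrightarrow> s \<le> t \<Longrightarrow> f (Some (v, s)) = Some (v, s)"
    and fixes_c: "\<And>s. 1 \<le> s \<Longrightarrow> s < t \<Longrightarrow> f (Some (c, s)) = Some (c, s)"
begin

lemma aut_inj: "x \<in> VM \<Longrightarrow> y \<in> VM \<Longrightarrow> f x = f y \<Longrightarrow> x = y"
  using inj_onD[OF graph_aut_inj_on[OF aut]] .

lemma aut_moves_isolated:
  assumes "x \<in> VM" "open_nbhd VM EM x = {}" "f x \<noteq> x"
  obtains j where "j \<in> I - D" "x = Some (j, 0)"
proof -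
  obtain j r where x: "x = Some (j, r)" "j \<in> I" "r < t"
    using assms(1,2) open_nbhd_empty_iff by blast
  have "r = 0"
  proof (rule ccontr)
    assume "r \<noteq> 0"
    moreover have "j \<in> T \<or> j = c" using c x(2) by blast
    ultimately have "f x = x"
      using x fixes_T fixes_c by auto
    with assms(3) show False by blast
  qed
  with x assms(3) fixes_D that show thesis by auto
qed

lemma aut_fixes_isolated_low:
  assumes "i \<in> I" "s < t"
  shows "f (Some (i, s)) = Some (i, s)"
proof (rule fixed_if_at_most_one_moved[where A = "{x \<in> VM. open_nbhd VM EM x = {}}"])
  let ?A = "{x \<in> VM. open_nbhd VM EM x = {}}"
  show "f ` ?A \<subseteq> ?A"
  proof
    fix y assume "y \<in> f ` ?A"
    then obtain x where "x \<in> VM" "open_nbhd VM EM x = {}" "y = f x" by blast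
    then show "y \<in> ?A" using graph_aut_open_nbhd[OF aut] graph_aut_in[OF aut] by simp
  qed
  show "inj_on f ?A"
    using graph_aut_inj_on[OF aut] by (rule inj_on_subset) blast
  show "Some (i, s) \<in> ?A"
    using assms I_subset open_nbhd_Some_I[of i s] by auto
  fix x y assume xy: "x \<in> ?A" "y \<in> ?A" "x \<noteq> y"
  show "f x = x \<or> f y = y"
  proof (rule ccontr)
    assume "\<not> (f x = x \<or> f y = y)"
    with xy obtain j j' where j: "j \<in> I - D" "x = Some (j, 0)" and j': "j' \<in> I - D" "y = Some (j', 0)"
      by (auto elim!: aut_moves_isolated)
    then have "j \<in> D \<or> j' \<in> D"
      using xy(3) determining_set_meets_twins[OF D I_twins[of j j']] loopless by blast
    with j j' show False by blast
  qed
qed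

lemma aut_fixes_None: "f None = None"
proof -
  obtain c' where "c' \<in> I" using I_nonempty by blast
  then have "Some (c', t) \<in> VM" "open_nbhd VM EM (Some (c', t)) = {None}"
    using I_subset open_nbhd_Some_I[of c' t] by auto
  then have "open_nbhd VM EM (f (Some (c', t))) = {f None}"
    using graph_aut_open_nbhd[OF aut] by simp
  then show ?thesis
    using open_nbhd_singleton graph_aut_in[OF aut] \<open>Some (c', t) \<in> VM\<close> by blast
qed

lemma aut_fixes_isolated_top:
  assumes "i \<in> I"
  shows "f (Some (i, t)) = Some (i, t)"
proof (rule fixed_if_at_most_one_moved[where A = "{x \<in> VM. open_nbhd VM EM x = {None}}"])
  let ?B = "{x \<in> VM. open_nbhd VM EM x = {None}}"
  show "f ` ?B \<subseteq> ?B"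
  proof
    fix y assume "y \<in> f ` ?B"
    then obtain x where "x \<in> VM" "open_nbhd VM EM x = {None}" "y = f x" by blast
    then show "y \<in> ?B"
      using graph_aut_open_nbhd[OF aut] graph_aut_in[OF aut] aut_fixes_None by simp
  qed
  show "inj_on f ?B"
    using graph_aut_inj_on[OF aut] by (rule inj_on_subset) blast
  show "Some (i, t) \<in> ?B"
    using assms I_subset open_nbhd_Some_I[of i t] by auto
  have moved: "x = Some (c, t)" if hyp: "x \<in> ?B" "f x \<noteq> x" for x
  proof -
    obtain j where j: "j \<in> I" "x = Some (j, t)"
      using hyp(1) open_nbhd_singleton[of x None] by auto
    then have "j \<notin> T" using hyp(2) fixes_T t_pos by auto
    with c j show ?thesis by blast
  qed
  fix x y assume "x \<in> ?B" "y \<in> ?B" "x \<noteq> y"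
  then show "f x = x \<or> f y = y" using moved[of x] moved[of y] by auto
qed

lemma aut_fixes_isolated: "i \<in> I \<Longrightarrow> s \<le> t \<Longrightarrow> f (Some (i, s)) = Some (i, s)"
  using aut_fixes_isolated_low aut_fixes_isolated_top by (cases "s < t") auto

lemma aut_graph_ball_iff:
  assumes "x \<in> VM"
  shows "f x \<in> graph_ball VM EM None k \<longleftrightarrow> x \<in> graph_ball VM EM None k"
proof -
  have "graph_ball VM EM None k \<subseteq> VM" by (simp add: graph_ball_subset)
  from inj_on_image_mem_iff[OF graph_aut_inj_on[OF aut] assms this]
  show ?thesis using graph_aut_graph_ball[OF aut] aut_fixes_None by simp
qed

lemma aut_preserves_level:
  assumes "v \<in> V" "s \<le> t"
  obtains v' where "v' \<in> V" "f (Some (v, s)) = Some (v', s)"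
proof (cases "v \<in> I")
  case True
  then show thesis using that assms aut_fixes_isolated by blast
next
  case False
  obtain k where k: "s + k = t" using assms(2) le_Suc_ex by blast
  have "Some (v, s) \<in> graph_ball VM EM None (Suc k)"
    using assms False k by (simp add: Some_in_graph_ball_None)
  moreover have "Some (v, s) \<notin> graph_ball VM EM None k"
    using k by (auto simp: Some_in_graph_ball_None)
  ultimately have fx: "f (Some (v, s)) \<in> graph_ball VM EM None (Suc k) - graph_ball VM EM None k"
    using aut_graph_ball_iff assms by auto
  then obtain v' s' where v': "f (Some (v, s)) = Some (v', s')"
    using None_in_graph_ball by (cases "f (Some (v, s))") auto
  with fx have "v' \<in> V" "s' = s"
    using k by (auto simp: Some_in_graph_ball_None)
  with v' show thesis using that by blast
qed

lemma aut_fixes_level_0: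
  assumes "v \<in> V"
  shows "f (Some (v, 0)) = Some (v, 0)"
proof -
  define g where "g u = fst (the (f (Some (u, 0))))" for u
  have g: "f (Some (u, 0)) = Some (g u, 0)" "g u \<in> V" if u: "u \<in> V" for u
  proof -
    obtain u' where "u' \<in> V" "f (Some (u, 0)) = Some (u', 0)"
      using aut_preserves_level[of u 0] u by blast
    then show "f (Some (u, 0)) = Some (g u, 0)" "g u \<in> V" unfolding g_def by simp_all
  qed
  have "graph_aut V E g"
  proof (rule graph_aut_of_bij_betw[OF finite_V])
    show "inj_on g V"
    proof (rule inj_onI)
      fix u w assume "u \<in> V" "w \<in> V" "g u = g w"
      then have "f (Some (u, 0)) = f (Some (w, 0))" using g by simp
      then show "u = w" using aut_inj[of "Some (u, 0)" "Some (w, 0)"] \<open>u \<in> V\<close> \<open>w \<in> V\<close> by simp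
    qed
    show "g ` V \<subseteq> V" using g by blast
    fix u w assume "u \<in> V" "w \<in> V"
    then have "{f (Some (u, 0)), f (Some (w, 0))} \<in> EM \<longleftrightarrow> {Some (u, 0), Some (w, 0)} \<in> EM"
      by (simp add: graph_aut_edge_iff[OF aut])
    with \<open>u \<in> V\<close> \<open>w \<in> V\<close> show "{g u, g w} \<in> E \<longleftrightarrow> {u, w} \<in> E"
      using g by (simp add: EM_Some_Some)
  qed
  moreover have "g u = u" if "u \<in> D" for u
  proof -
    have "u \<in> V" using D that unfolding determining_set_def by blast
    then show ?thesis using g(1)[of u] fixes_D[OF that] by simp
  qed
  ultimately have "g v = v" using D assms unfolding determining_set_def by blast
  with g assms show ?thesis by simp
qed

lemma aut_fixes_Some: "v \<in> V \<Longrightarrow> s \<le> t \<Longrightarrow> f (Some (v, s)) = Some (v, s)"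
proof (induction s arbitrary: v)
  case 0
  then show ?case by (simp add: aut_fixes_level_0)
next
  case (Suc s)
  obtain w where w: "w \<in> V" "f (Some (v, Suc s)) = Some (w, Suc s)"
    using aut_preserves_level Suc.prems by blast
  have "{a, v} \<in> E \<longleftrightarrow> {a, w} \<in> E" if "a \<in> V" for a
  proof -
    have "{a, v} \<in> E \<longleftrightarrow> {Some (a, s), Some (v, Suc s)} \<in> EM"
      using Suc.prems by (simp add: EM_Some_Some)
    also have "\<dots> \<longleftrightarrow> {f (Some (a, s)), f (Some (v, Suc s))} \<in> EM"
      using Suc.prems that by (simp add: graph_aut_edge_iff[OF aut])
    also have "\<dots> \<longleftrightarrow> {a, w} \<in> E"
      using Suc that w by (simp add: EM_Some_Some)
    finally show ?thesis .
  qed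
  then have "twins V E v w" using Suc.prems w by (simp add: twins_iff)
  then have "v = w \<or> v \<in> T \<or> w \<in> T" using T_cover unfolding twin_cover_def by blast
  then have "w = v"
  proof (elim disjE)
    assume "v \<in> T"
    then show "w = v" using fixes_T[of v "Suc s"] Suc.prems w by simp
  next
    assume "w \<in> T"
    then have "f (Some (w, Suc s)) = f (Some (v, Suc s))"
      using fixes_T[of w "Suc s"] Suc.prems w by simp
    then show "w = v" using aut_inj[of "Some (w, Suc s)" "Some (v, Suc s)"] Suc.prems w by simp
  qed simp
  with w show ?case by simp
qed

lemma aut_is_id: "x \<in> VM \<Longrightarrow> f x = x"
  by (cases x rule: VM_cases) (simp_all add: aut_fixes_None aut_fixes_Some)

end

lemma determining_set_upper:
  assumes D: "determining_set V E D" and c: "I - T = {c}"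
  shows "determining_set VM EM (Some ` (D \<times> {0}) \<union> Some ` (T \<times> {1..t}) \<union> Some ` ({c} \<times> {1..<t}))"
    (is "determining_set VM EM ?S")
  unfolding determining_set_def
proof (intro conjI allI impI)
  show "?S \<subseteq> VM"
    using D T_cover c I_subset unfolding determining_set_def twin_cover_def by auto
  fix f assume "graph_aut VM EM f \<and> (\<forall>x\<in>?S. f x = x)"
  then show "\<forall>x\<in>VM. f x = x"
    using aut_is_id[of f D c] D c by auto
qed

lemma det_num_myc_le: "det_num VM EM \<le> t * card T + det_num V E + t - 1"
proof -
  obtain D where D: "determining_set V E D" "card D = det_num V E"
    using det_num_attained[OF finite_V] by blast
  obtain c where c: "I - T = {c}" using I_minus_T by blast
  have "finite D" using D(1) finite_V finite_subset unfolding determining_set_def by blast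
  let ?A = "Some ` (D \<times> {0::nat})" and ?B = "Some ` (T \<times> {1..t})" and ?C = "Some ` ({c} \<times> {1..<t})"
  have "c \<notin> T" using c by blast
  then have disj: "?A \<inter> ?B = {}" "(?A \<union> ?B) \<inter> ?C = {}" by auto
  have fin: "finite ?A" "finite ?B" "finite ?C" using \<open>finite D\<close> finite_T by simp_all
  have "card (?A \<union> ?B \<union> ?C) = card (?A \<union> ?B) + card ?C"
    using fin disj by (intro card_Un_disjoint) simp_all
  moreover have "card (?A \<union> ?B) = card ?A + card ?B"
    by (rule card_Un_disjoint[OF fin(1,2) disj(1)])
  moreover have "card ?A = card D" "card ?B = card T * t" "card ?C = t - 1"
    by (simp_all add: card_image card_cartesian_product)
  ultimately have "card (?A \<union> ?B \<union> ?C) = card D + card T * t + (t - 1)" by simp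
  then show ?thesis
    using det_num_le[OF finite_VM determining_set_upper[OF D(1) c]] D(2) t_pos
    by (simp add: mult.commute)
qed


definition level :: "('a \<times> nat) option set \<Rightarrow> nat \<Rightarrow> 'a set" where
  "level S s = {v \<in> V - I. Some (v, s) \<in> S}"

lemma twin_cover_level:
  assumes S: "determining_set VM EM S" and c: "c \<in> I" and s: "s \<le> t"
  shows "twin_cover V E (level S s \<inter> Collect (has_twin V E) \<union> (I - {c}))"
  unfolding twin_cover_def
proof (intro conjI allI impI)
  show "level S s \<inter> Collect (has_twin V E) \<union> (I - {c}) \<subseteq> V"
    unfolding level_def using I_subset by blast
  fix u v assume uv: "u \<noteq> v \<and> twins V E u v"
  show "u \<in> level S s \<inter> Collect (has_twin V E) \<union> (I - {c}) \<or>
        v \<in> level S s \<inter> Collect (has_twin V E) \<union> (I - {c})"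
  proof (cases "u \<in> I")
    case True
    then show ?thesis using uv twins_I_iff by blast
  next
    case False
    then have "v \<notin> I" using uv twins_I_iff by blast
    have "Some (u, s) \<in> S \<or> Some (v, s) \<in> S"
      using determining_set_meets_twins[OF S twins_Some[OF _ s]] uv EM_loopless by blast
    moreover have "has_twin V E u" "has_twin V E v"
      using uv twins_sym[of V E u v] unfolding has_twin_def by auto
    ultimately show ?thesis
      using uv False \<open>v \<notin> I\<close> unfolding level_def twins_def by blast
  qed
qed

lemma graph_aut_fixes_I:
  assumes g: "graph_aut V E g" and fixed: "\<forall>i\<in>I - {c}. g i = i" and i: "i \<in> I"
  shows "g i = i"
proof (rule fixed_if_at_most_one_moved[of g I])
  show "g ` I \<subseteq> I"
    using graph_aut_open_nbhd[OF g] graph_aut_in[OF g] unfolding I_def by auto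
  show "inj_on g I" using graph_aut_inj_on[OF g] I_subset by (rule inj_on_subset)
qed (use fixed i in blast)+

lemma determining_set_levels:
  assumes S: "determining_set VM EM S" and c: "c \<in> I"
  shows "determining_set V E (level S 0 \<union> (\<Union>s\<in>{1..t}. level S s - Collect (has_twin V E)) \<union> (I - {c}))"
    (is "determining_set V E ?X")
  unfolding determining_set_def
proof (intro conjI allI impI)
  show "?X \<subseteq> V" unfolding level_def using I_subset by blast
  fix g assume g: "graph_aut V E g \<and> (\<forall>x\<in>?X. g x = x)"
  have C: "twin_cover V E (level S 0 \<inter> Collect (has_twin V E) \<union> (I - {c}))"
    "\<forall>x \<in> level S 0 \<inter> Collect (has_twin V E) \<union> (I - {c}). g x = x"
    using twin_cover_level[OF S c] g by auto
  have g_I: "g i = i" if "i \<in> I" for i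
    using graph_aut_fixes_I[of g c i] g that by blast
  have "twin_lift g x = x" if x: "x \<in> S" for x
  proof -
    have "x \<in> VM" using S x unfolding determining_set_def by blast
    then show ?thesis
    proof (cases x rule: VM_cases)
      case (Some v s)
      have "g v = v" if "s = 0 \<or> \<not> has_twin V E v"
      proof (cases "v \<in> I")
        case False
        then have "v \<in> level S s" using Some x unfolding level_def by simp
        then have "v \<in> ?X" using that Some by (cases "s = 0") auto
        then show ?thesis using g by blast
      qed (rule g_I)
      then show ?thesis using Some unfolding twin_lift_def by auto
    qed (simp add: twin_lift_def)
  qed
  with graph_aut_twin_lift[OF _ C] g S have lift_id: "\<forall>x\<in>VM. twin_lift g x = x"
    unfolding determining_set_def by blast
  show "\<forall>v\<in>V. g v = v"
  proof
    fix v assume "v \<in> V"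
    with bspec[OF lift_id, of "Some (v, 0)"] show "g v = v" by (simp add: twin_lift_def)
  qed
qed

lemma finite_level: "finite (level S s)"
  unfolding level_def using finite_V by simp

lemma card_twin_cover_le_level:
  assumes "determining_set VM EM S" "c \<in> I" "s \<le> t"
  shows "card T \<le> card (level S s \<inter> Collect (has_twin V E)) + (card I - 1)"
proof -
  have "card T \<le> card (level S s \<inter> Collect (has_twin V E) \<union> (I - {c}))"
    using min_cover twin_cover_level[OF assms] unfolding min_twin_cover_def by blast
  also have "\<dots> \<le> card (level S s \<inter> Collect (has_twin V E)) + card (I - {c})"
    by (rule card_Un_le)
  finally show ?thesis using assms(2) finite_I by simp
qed

lemma det_num_le_levels:
  assumes "determining_set VM EM S" "c \<in> I"
  shows "det_num V E \<le>
    card (level S 0) + (\<Sum>s=1..t. card (level S s - Collect (has_twin V E))) + (card I - 1)"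
proof -
  have "det_num V E \<le>
      card (level S 0 \<union> (\<Union>s\<in>{1..t}. level S s - Collect (has_twin V E)) \<union> (I - {c}))"
    by (rule det_num_le[OF finite_V determining_set_levels[OF assms]])
  also have "\<dots> \<le> card (level S 0) + card (\<Union>s\<in>{1..t}. level S s - Collect (has_twin V E))
      + card (I - {c})"
    by (meson add_right_mono card_Un_le le_trans)
  also have "\<dots> \<le> card (level S 0) + (\<Sum>s=1..t. card (level S s - Collect (has_twin V E)))
      + card (I - {c})"
    using card_UN_le[of "{1..t}" "\<lambda>s. level S s - Collect (has_twin V E)"] by simp
  finally show ?thesis using assms(2) finite_I by simp
qed

lemma card_levels_le:
  assumes S: "determining_set VM EM S"
  defines "Iso \<equiv> Some ` (I \<times> {..<t})" and "Pend \<equiv> Some ` (I \<times> {t})"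
  shows "card (Iso \<inter> S) + card (Pend \<inter> S) + (\<Sum>s\<le>t. card (level S s)) \<le> card S"
proof -
  have "finite S"
    using S finite_subset[OF _ finite_VM] unfolding determining_set_def by blast
  define Q where "Q s = (\<lambda>v. Some (v, s)) ` level S s" for s
  have card_Q: "card (Q s) = card (level S s)" for s
    unfolding Q_def by (rule card_image) (simp add: inj_on_def)
  have "card (\<Union>s\<in>{..t}. Q s) = (\<Sum>s\<le>t. card (Q s))"
    using finite_level by (intro card_UN_disjoint) (auto simp: Q_def)
  moreover have "card (Iso \<inter> S \<union> Pend \<inter> S \<union> (\<Union>s\<in>{..t}. Q s))
      = card (Iso \<inter> S) + card (Pend \<inter> S) + card (\<Union>s\<in>{..t}. Q s)"
  proof -
    have fin: "finite (Iso \<inter> S)" "finite (Pend \<inter> S)" "finite (\<Union>s\<in>{..t}. Q s)"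
      using \<open>finite S\<close> finite_level by (auto simp: Q_def)
    have disj: "(Iso \<inter> S) \<inter> (Pend \<inter> S) = {}"
      "(Iso \<inter> S \<union> Pend \<inter> S) \<inter> (\<Union>s\<in>{..t}. Q s) = {}"
      unfolding Iso_def Pend_def Q_def level_def by auto
    have "card (Iso \<inter> S \<union> Pend \<inter> S \<union> (\<Union>s\<in>{..t}. Q s))
        = card (Iso \<inter> S \<union> Pend \<inter> S) + card (\<Union>s\<in>{..t}. Q s)"
      using fin disj(2) by (intro card_Un_disjoint) simp_all
    also have "card (Iso \<inter> S \<union> Pend \<inter> S) = card (Iso \<inter> S) + card (Pend \<inter> S)"
      using fin disj(1) by (intro card_Un_disjoint) simp_all
    finally show ?thesis .
  qed
  moreover have "card (Iso \<inter> S \<union> Pend \<inter> S \<union> (\<Union>s\<in>{..t}. Q s)) \<le> card S"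
    using \<open>finite S\<close> by (intro card_mono) (auto simp: Q_def level_def)
  ultimately show ?thesis by (simp add: card_Q)
qed

lemma card_determining_set_ge:
  assumes S: "determining_set VM EM S"
  shows "t * card T + det_num V E + t - 1 \<le> card S"
proof -
  obtain c where c: "c \<in> I" using I_nonempty by blast
  let ?NT = "Collect (has_twin V E)"
  let ?Iso = "Some ` (I \<times> {..<t})" and ?Pend = "Some ` (I \<times> {t})"
  define k where "k = card I"
  have "1 \<le> k" using finite_I I_nonempty by (simp add: k_def Suc_le_eq card_gt_0_iff)
  have "card ?Iso \<le> Suc (card (?Iso \<inter> S))"
    using finite_I I_subset open_nbhd_Some_I
    by (intro card_twin_class_le_Suc[OF S]) (auto simp: EM_loopless twins_def)
  then have iso: "t * k \<le> Suc (card (?Iso \<inter> S))"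
    by (simp add: k_def card_image card_cartesian_product mult.commute)
  have "card ?Pend \<le> Suc (card (?Pend \<inter> S))"
    using finite_I I_subset open_nbhd_Some_I
    by (intro card_twin_class_le_Suc[OF S]) (auto simp: EM_loopless twins_def)
  then have pend: "k \<le> Suc (card (?Pend \<inter> S))"
    by (simp add: k_def card_image card_cartesian_product)
  have "{..t} = insert 0 {1..t}" by auto
  then have "(\<Sum>s\<le>t. card (level S s)) = card (level S 0) + (\<Sum>s=1..t. card (level S s))"
    by simp
  also have "(\<Sum>s=1..t. card (level S s))
      = (\<Sum>s=1..t. card (level S s \<inter> ?NT)) + (\<Sum>s=1..t. card (level S s - ?NT))"
    unfolding sum.distrib[symmetric] using card_Int_Diff[OF finite_level] by simp
  finally have levels: "(\<Sum>s\<le>t. card (level S s)) = card (level S 0)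
      + (\<Sum>s=1..t. card (level S s \<inter> ?NT)) + (\<Sum>s=1..t. card (level S s - ?NT))" by simp
  have "(\<Sum>s=1..t. card T) \<le> (\<Sum>s=1..t. card (level S s \<inter> ?NT) + (k - 1))"
    using card_twin_cover_le_level[OF S c] by (intro sum_mono) (simp add: k_def)
  then have cover: "t * card T \<le> (\<Sum>s=1..t. card (level S s \<inter> ?NT)) + (t * k - t)"
    by (simp add: sum.distrib right_diff_distrib')
  have "t \<le> t * k" using \<open>1 \<le> k\<close> by simp
  with iso pend levels cover det_num_le_levels[OF S c] card_levels_le[OF S] show ?thesis
    unfolding k_def by linarith
qed

lemma det_num_myc: "det_num VM EM = t * card T + det_num V E + t - 1"
  using det_num_myc_le card_determining_set_ge det_num_attained[OF finite_VM] by (metis le_antisym)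

end

theorem mainTheorem9:
  fixes V :: "'a set" and E :: "'a set set" and T :: "'a set" and t :: nat
  assumes "simple_graph V E"
    and "\<exists>v. isolated_vertex V E v"
    and "min_twin_cover V E T"
    and "t \<ge> 1"
  shows "(card V = 1 \<longrightarrow>
            det_num V E = 0 \<and> det_num (myc_vertices t V) (myc_edges t V E) = t)
       \<and> (card V \<noteq> 1 \<longrightarrow>
            det_num (myc_vertices t V) (myc_edges t V E) = t * card T + det_num V E + t - 1)"
proof -
  interpret mycielskian V E t using assms(1,4) by unfold_locales
  have "det_num V E = 0 \<and> det_num VM EM = t" if "card V = 1"
    using that det_num_singleton by (metis card_1_singletonE)
  moreover have "det_num VM EM = t * card T + det_num V E + t - 1" if "card V \<noteq> 1"
  proof -
    interpret mycielskian_isolated V E t T using assms(2,3) that by unfold_locales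
    show ?thesis by (rule det_num_myc)
  qed
  ultimately show ?thesis by blast
qed

end
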